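(* Let $\beta\in\mathbb{R}^p$ be fixed and $\sigma^2>0$. Assume the following: - $(X^TDX)^{-1}$ exists with probability $1$; - $v^g_l<\infty$; - there is a constant $\delta>0$, not depending on $x$, with $\mathbb{E}[g'(x^T\beta)\mid xx^T]=\delta$. Then: 1. $v^g_l+v^g_u-2v^g_s>0$. 2. The function $\dot r$ has a unique global minimizer $\dot\alpha$ over $\alpha\in\mathbb{R}$, which lies in $(0,\infty)$ and equals $$\dot\alpha=\frac{\sigma^2(v^g_l-v^g_s)}{B_g(\breve\beta)+\sigma^2(v^g_l+v^g_u-2v^g_s)}.$$ 3. The minimum value is $$\dot r(\dot\alpha)=\sigma^2v^g_l-\frac{\sigma^4(v^g_l-v^g_s)^2}{B_g(\breve\beta)+\sigma^2(v^g_l+v^g_u-2v^g_s)}.$$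
   Context: Let $p<n$. The labeled data $(x_1,y_1),\dots,(x_n,y_n)$ are i.i.d. copies of $(x,y)\in\mathbb{R}^p\times\mathbb{R}$. Write $X\in\mathbb{R}^{n\times p}$ for the matrix with rows $x_i^T$ and $Y=(y_1,\dots,y_n)^T$. The distribution $P_x$ is known and satisfies $\mathbb{E}[x]=0$. The model is a generalized linear model, $\mathbb{E}[y\mid x]=g(x^T\beta)$, with a known, monotonically increasing, differentiable link $g$ and $\mathrm{Var}(y\mid x)=\sigma^2$. Notation: - $\mu\in\mathbb{R}^n$ has $\mu_i=g(x_i^T\beta)$. - $D$ is diagonal with $D_{ii}=g'(x_i^T\beta)$. - $H_g=\mathbb{E}_X[X^TDX]$. - $\widehat{\mathrm{Cov}}(X,\mu)\in\mathbb{R}^p$ has $j$-th entry $\frac1n\sum_i(x_{ij}-\bar X_j)(\mu_i-\bar\mu)$, where $\bar X_j=\frac1n\sum_i x_{ij}$ and $\bar\mu=\frac1n\sum_i\mu_i$. Define: - $v^g_l=\mathrm{tr}\big(\mathbb{E}_X[(X^TDX)^{-1}X^TX(X^TDX)^{-1}]H_g\big)$; - $v^g_u=\frac{n-1}{n}\mathrm{tr}(H_g^{-1}\mathbb{E}_X[X^TX])$; - $v^g_s=\frac{n-1}{n}\mathrm{tr}\big(\mathbb{E}_X[X^TX(X^TDX)^{-1}]\big)$; - $B_g(\breve\beta)=\mathrm{tr}\big(H_g^{-1}\mathrm{Var}_X(n\widehat{\mathrm{Cov}}(X,\mu))\big)$. The quadratic approximation of the prediction error of the linear-mixed estimator, up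 to a positive constant and an additive constant, is the function $$\dot r(\alpha)=\alpha^2B_g(\breve\beta)+\sigma^2\big(\alpha^2v^g_u+(1-\alpha)^2v^g_l+2\alpha(1-\alpha)v^g_s\big),\qquad \alpha\in\mathbb{R}.$$ *)

theory Defs
  imports "HOL-Analysis.Analysis" "HOL-Probability.Probability"
begin

definition outerp :: "real^'a \<Rightarrow> real^'b \<Rightarrow> real^'b^'a" where
  "outerp a b = (\<chi> i j. a$i * b$j)"

text \<open>Sample space of the i.i.d. design: rows x_i, i in the finite type 'n (n = CARD('n)).\<close>
definition sampleM :: "(real^'p) measure \<Rightarrow> ('n::finite \<Rightarrow> real^'p) measure" where
  "sampleM Px = PiM UNIV (\<lambda>_. Px)"

definition Xmat :: "('n::finite \<Rightarrow> real^'p) \<Rightarrow> real^'p^'n" where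
  "Xmat w = (\<chi> i. w i)"

definition Dmat :: "(real \<Rightarrow> real) \<Rightarrow> real^'p \<Rightarrow> ('n::finite \<Rightarrow> real^'p) \<Rightarrow> real^'n^'n" where
  "Dmat g \<beta> w = (\<chi> i k. if i = k then deriv g (w i \<bullet> \<beta>) else 0)"

definition muvec :: "(real \<Rightarrow> real) \<Rightarrow> real^'p \<Rightarrow> ('n::finite \<Rightarrow> real^'p) \<Rightarrow> real^'n" where
  "muvec g \<beta> w = (\<chi> i. g (w i \<bullet> \<beta>))"

definition XtX :: "('n::finite \<Rightarrow> real^'p) \<Rightarrow> real^'p^'p" where
  "XtX w = transpose (Xmat w) ** Xmat w"

definition XtDX :: "(real \<Rightarrow> real) \<Rightarrow> real^'p \<Rightarrow> ('n::finite \<Rightarrow> real^'p) \<Rightarrow> real^'p^'p" where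
  "XtDX g \<beta> w = transpose (Xmat w) ** Dmat g \<beta> w ** Xmat w"

definition covhat :: "(real \<Rightarrow> real) \<Rightarrow> real^'p \<Rightarrow> ('n::finite \<Rightarrow> real^'p) \<Rightarrow> real^'p" where
  "covhat g \<beta> w = (\<chi> j.
     (1 / real CARD('n)) * (\<Sum>i\<in>UNIV.
        ((Xmat w)$i$j - (1 / real CARD('n)) * (\<Sum>k\<in>UNIV. (Xmat w)$k$j)) *
        ((muvec g \<beta> w)$i - (1 / real CARD('n)) * (\<Sum>k\<in>UNIV. (muvec g \<beta> w)$k))))"

definition varmat :: "'s measure \<Rightarrow> ('s \<Rightarrow> real^'p) \<Rightarrow> real^'p^'p" where
  "varmat M Z = integral\<^sup>L M (\<lambda>w. outerp (Z w - integral\<^sup>L M Z) (Z w - integral\<^sup>L M Z))"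

definition Hg :: "(real^'p) measure \<Rightarrow> (real \<Rightarrow> real) \<Rightarrow> real^'p \<Rightarrow> 'n::finite itself \<Rightarrow> real^'p^'p" where
  "Hg Px g \<beta> (_::'n itself) = integral\<^sup>L (sampleM Px :: ('n \<Rightarrow> real^'p) measure) (XtDX g \<beta>)"

definition vgl :: "(real^'p) measure \<Rightarrow> (real \<Rightarrow> real) \<Rightarrow> real^'p \<Rightarrow> 'n::finite itself \<Rightarrow> real" where
  "vgl Px g \<beta> N = trace (integral\<^sup>L (sampleM Px :: ('n \<Rightarrow> real^'p) measure)
      (\<lambda>w. matrix_inv (XtDX g \<beta> w) ** XtX w ** matrix_inv (XtDX g \<beta> w)) ** Hg Px g \<beta> N)"

definition vgu :: "(real^'p) measure \<Rightarrow> (real \<Rightarrow> real) \<Rightarrow> real^'p \<Rightarrow> 'n::finite itself \<Rightarrow> real" where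
  "vgu Px g \<beta> N = (real CARD('n) - 1) / real CARD('n) *
      trace (matrix_inv (Hg Px g \<beta> N) ** integral\<^sup>L (sampleM Px :: ('n \<Rightarrow> real^'p) measure) XtX)"

definition vgs :: "(real^'p) measure \<Rightarrow> (real \<Rightarrow> real) \<Rightarrow> real^'p \<Rightarrow> 'n::finite itself \<Rightarrow> real" where
  "vgs Px g \<beta> (_::'n itself) = (real CARD('n) - 1) / real CARD('n) *
      trace (integral\<^sup>L (sampleM Px :: ('n \<Rightarrow> real^'p) measure) (\<lambda>w. XtX w ** matrix_inv (XtDX g \<beta> w)))"

definition Bg :: "(real^'p) measure \<Rightarrow> (real \<Rightarrow> real) \<Rightarrow> real^'p \<Rightarrow> 'n::finite itself \<Rightarrow> real" where
  "Bg Px g \<beta> N = trace (matrix_inv (Hg Px g \<beta> N) **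
      varmat (sampleM Px :: ('n \<Rightarrow> real^'p) measure) (\<lambda>w. real CARD('n) *\<^sub>R covhat g \<beta> w))"

definition rdot :: "(real^'p) measure \<Rightarrow> (real \<Rightarrow> real) \<Rightarrow> real^'p \<Rightarrow> real \<Rightarrow> 'n::finite itself \<Rightarrow> real \<Rightarrow> real" where
  "rdot Px g \<beta> \<sigma>2 N \<alpha> = \<alpha>^2 * Bg Px g \<beta> N + \<sigma>2 * (\<alpha>^2 * vgu Px g \<beta> N + (1 - \<alpha>)^2 * vgl Px g \<beta> N
      + 2 * \<alpha> * (1 - \<alpha>) * vgs Px g \<beta> N)"

end

theory Submission
  imports Defs
begin

text \<open>Write \<open>C = X\<^sup>T X\<close>, \<open>A = X\<^sup>T D X = \<Sum>\<^sub>i g'(x\<^sub>i\<^sup>T \<beta>) x\<^sub>i x\<^sub>i\<^sup>T\<close> and \<open>H = E A\<close>.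
  Because \<open>E[g'(x\<^sup>T \<beta>) | x x\<^sup>T] = \<delta>\<close>, the weight \<open>g'(x\<^sub>i\<^sup>T \<beta>)\<close> may be replaced by \<open>\<delta>\<close>
  in the expectation of any function of the design that depends on \<open>x\<^sub>i\<close> only through
  \<open>x\<^sub>i x\<^sub>i\<^sup>T\<close>. This gives \<open>H = \<delta> E C\<close>, hence \<open>v\<^sub>u = (n-1)/n \<cdot> p/\<delta>\<close>, and
  \<open>E tr(C\<^sup>-\<^sup>1 A) = \<delta> p\<close>, since the leverage scores \<open>x\<^sub>i\<^sup>T C\<^sup>-\<^sup>1 x\<^sub>i\<close> sum to \<open>p\<close>.
  Let \<open>s = tr E[C A\<^sup>-\<^sup>1]\<close>, so that \<open>v\<^sub>s = (n-1)/n \<cdot> s\<close>. Positive semidefiniteness of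
  \<open>(A\<^sup>-\<^sup>1 - t H\<^sup>-\<^sup>1) C (A\<^sup>-\<^sup>1 - t H\<^sup>-\<^sup>1)\<close> gives \<open>v\<^sub>l - 2 t s + t\<^sup>2 p/\<delta> \<ge> 0\<close> for all \<open>t\<close>,
  and that of \<open>(A - \<delta> C) A\<^sup>-\<^sup>1 (A - \<delta> C)\<close> gives \<open>s \<ge> p/\<delta>\<close>. Together these force
  \<open>v\<^sub>l + v\<^sub>u - 2 v\<^sub>s > 0\<close> and \<open>v\<^sub>l > v\<^sub>s\<close>; as \<open>B\<^sub>g \<ge> 0\<close>, \<open>r\<close> is a quadratic in \<open>\<alpha>\<close>
  with positive leading coefficient, and completing the square gives the minimizer and
  the minimum.\<close>

section \<open>Matrices\<close>

definition pos_semidef :: "real^'n^'n \<Rightarrow> bool" where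
  "pos_semidef M \<longleftrightarrow> (\<forall>v. 0 \<le> v \<bullet> (M *v v))"

lemma matrix_inv_right:
  fixes M :: "real^'n^'n"
  assumes "invertible M"
  shows "M ** matrix_inv M = mat 1"
  using someI_ex[OF assms[unfolded invertible_def]] unfolding matrix_inv_def by blast

lemma matrix_inv_left:
  fixes M :: "real^'n^'n"
  assumes "invertible M"
  shows "matrix_inv M ** M = mat 1"
  using someI_ex[OF assms[unfolded invertible_def]] unfolding matrix_inv_def by blast

lemma transpose_matrix_inv_symmetric:
  fixes M :: "real^'n^'n"
  assumes "invertible M" "transpose M = M"
  shows "transpose (matrix_inv M) = matrix_inv M"
proof -
  have "transpose (matrix_inv M) ** M = mat 1"
    using matrix_inv_right[OF assms(1)] assms(2) by (metis matrix_transpose_mul transpose_mat)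
  then have "transpose (matrix_inv M) = transpose (matrix_inv M) ** (M ** matrix_inv M)"
    using matrix_inv_right[OF assms(1)] by simp
  also have "\<dots> = matrix_inv M"
    by (simp add: matrix_mul_assoc \<open>transpose (matrix_inv M) ** M = mat 1\<close>)
  finally show ?thesis .
qed

lemma pos_semidef_matrix_inv:
  fixes M :: "real^'n^'n"
  assumes "invertible M" "pos_semidef M"
  shows "pos_semidef (matrix_inv M)"
  unfolding pos_semidef_def
proof
  fix v
  define u where "u = matrix_inv M *v v"
  have v: "v = M *v u"
    unfolding u_def matrix_vector_mul_assoc matrix_inv_right[OF assms(1)] by simp
  have "v \<bullet> (matrix_inv M *v v) = u \<bullet> (M *v u)"
    by (simp add: v[symmetric] u_def[symmetric] inner_commute)
  then show "0 \<le> v \<bullet> (matrix_inv M *v v)"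
    using assms(2) unfolding pos_semidef_def by simp
qed

lemma invertible_if_pos_def:
  fixes M :: "real^'n^'n"
  assumes "\<And>v. v \<noteq> 0 \<Longrightarrow> 0 < v \<bullet> (M *v v)"
  shows "invertible M"
proof -
  have "\<forall>v. M *v v = 0 \<longrightarrow> v = 0"
    using assms by (metis inner_zero_right less_irrefl)
  then show ?thesis
    using matrix_left_invertible_ker invertible_left_inverse by blast
qed

lemma matrix_diff_rdistrib: "((A::real^'n^'m) - B) ** (C::real^'p^'n) = A ** C - B ** C"
  by (vector matrix_matrix_mult_def sum_subtractf left_diff_distrib)

lemma matrix_diff_ldistrib: "(A::real^'n^'m) ** ((B::real^'p^'n) - C) = A ** B - A ** C"
  by (vector matrix_matrix_mult_def sum_subtractf right_diff_distrib)

lemma matrix_add_rdistrib: "((A::real^'n^'m) + B) ** (C::real^'p^'n) = A ** C + B ** C"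
  by (vector matrix_matrix_mult_def sum.distrib distrib_right)

lemma matrix_scaleR_left: "(k *\<^sub>R (A::real^'n^'m)) ** (B::real^'p^'n) = k *\<^sub>R (A ** B)"
  by (simp add: scalar_matrix_assoc)

lemma matrix_scaleR_right: "(A::real^'n^'m) ** (k *\<^sub>R (B::real^'p^'n)) = k *\<^sub>R (A ** B)"
  by (simp add: matrix_matrix_mult_def sum_distrib_left mult_ac vec_eq_iff)

lemma matrix_mult_sum_right:
  "(M::real^'n^'m) ** (\<Sum>i\<in>S. N i :: real^'k^'n) = (\<Sum>i\<in>S. M ** N i)"
  by (induction S rule: infinite_finite_induct) (auto simp: matrix_add_ldistrib)

lemma sum_matrix_vector_mult: "(\<Sum>i\<in>S. (M i :: real^'n^'m)) *v v = (\<Sum>i\<in>S. M i *v v)"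
  by (induction S rule: infinite_finite_induct) (auto simp: matrix_vector_mult_add_rdistrib)

lemma scaleR_matrix_vector_mult: "(c *\<^sub>R (M :: real^'n^'m)) *v v = c *\<^sub>R (M *v v)"
  by (simp add: matrix_vector_mult_def vec_eq_iff sum_distrib_left mult_ac)

lemma trace_scaleR: "trace (k *\<^sub>R (A::real^'n^'n)) = k * trace A"
  by (simp add: trace_def sum_distrib_left)

lemma trace_sum: "trace (\<Sum>i\<in>S. N i :: real^'n^'n) = (\<Sum>i\<in>S. trace (N i))"
  by (induction S rule: infinite_finite_induct) (auto simp: trace_add trace_0[simplified])

lemma trace_mult_outerp: "trace ((M::real^'n^'n) ** outerp x x) = x \<bullet> (M *v x)"
  by (simp add: trace_def matrix_matrix_mult_def outerp_def inner_vec_def matrix_vector_mult_def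
      sum_distrib_left sum_distrib_right mult_ac)

lemma outerp_mult_vector: "outerp x y *v v = (y \<bullet> v) *\<^sub>R x"
  by (simp add: outerp_def matrix_vector_mult_def inner_vec_def vec_eq_iff sum_distrib_left mult_ac)

lemma quadratic_form_outerp: "v \<bullet> (outerp x x *v v) = (x \<bullet> v)^2"
  by (simp add: outerp_mult_vector power2_eq_square inner_commute)

lemma trace_congruence_nonneg:
  fixes P :: "real^'m^'n" and Q :: "real^'n^'n"
  assumes "pos_semidef Q"
  shows "0 \<le> trace (transpose P ** Q ** P)"
proof -
  have "trace (transpose P ** Q ** P) = (\<Sum>j\<in>UNIV. column j P \<bullet> (Q *v column j P))"
    by (simp add: trace_def matrix_matrix_mult_def transpose_def column_def inner_vec_def
        matrix_vector_mult_def sum_distrib_left sum_distrib_right mult_ac)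
      (rule sum.cong[OF refl], subst sum.swap, simp add: mult_ac)
  also have "\<dots> \<ge> 0"
    using assms unfolding pos_semidef_def by (intro sum_nonneg) auto
  finally show ?thesis .
qed

lemma symmetric_quadratic_form_eq_0:
  fixes S :: "real^'p^'p"
  assumes "transpose S = S" "\<And>v. v \<bullet> (S *v v) = 0"
  shows "S = 0"
proof -
  have entry: "axis j 1 \<bullet> (S *v axis k 1) = S $ j $ k" for j k
    by (simp add: inner_vec_def matrix_vector_mult_def axis_def if_distrib if_distribR cong: if_cong)
  have "S $ j $ k = 0" for j k
  proof -
    let ?u = "axis j 1 :: real^'p" and ?w = "axis k 1 :: real^'p"
    have "0 = (?u + ?w) \<bullet> (S *v (?u + ?w))" using assms(2) by simp
    also have "\<dots> = ?u \<bullet> (S *v ?u) + ?u \<bullet> (S *v ?w) + ?w \<bullet> (S *v ?u) + ?w \<bullet> (S *v ?w)"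
      by (simp add: matrix_vector_right_distrib inner_add_left inner_add_right)
    also have "\<dots> = S $ j $ k + S $ k $ j" using assms(2) by (simp add: entry)
    also have "S $ k $ j = S $ j $ k" using assms(1) by (metis transpose_def vec_lambda_beta)
    finally show ?thesis by simp
  qed
  then show ?thesis by (simp add: vec_eq_iff)
qed

lemma bounded_linear_quadratic_form: "bounded_linear (\<lambda>M::real^'p^'p. v \<bullet> (M *v v))"
  by (subst linear_conv_bounded_linear[symmetric])
     (auto intro!: linearI simp: matrix_vector_mult_add_rdistrib scaleR_matrix_vector_mult inner_add_right)

lemma bounded_linear_trace: "bounded_linear (trace :: real^'n^'n \<Rightarrow> real)"
  by (subst linear_conv_bounded_linear[symmetric])
     (auto intro!: linearI simp: trace_add trace_scaleR)

lemma bounded_linear_trace_mult_right: "bounded_linear (\<lambda>M::real^'n^'n. trace (M ** H))"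
  by (subst linear_conv_bounded_linear[symmetric])
     (auto intro!: linearI simp: trace_add trace_scaleR matrix_add_rdistrib matrix_scaleR_left)

lemma bounded_linear_trace_mult_left: "bounded_linear (\<lambda>M::real^'n^'n. trace (H ** M))"
  by (subst linear_conv_bounded_linear[symmetric])
     (auto intro!: linearI simp: trace_add trace_scaleR matrix_add_ldistrib matrix_scaleR_right)

lemma bounded_linear_transpose: "bounded_linear (transpose :: real^'n^'m \<Rightarrow> real^'m^'n)"
  by (subst linear_conv_bounded_linear[symmetric])
     (auto intro!: linearI simp: transpose_def vec_eq_iff)

text \<open>Expansion of \<open>0 \<le> tr((Ai - t Hi) X\<^sup>T X (Ai - t Hi) H)\<close> for \<open>Hi = H\<^sup>-\<^sup>1\<close>.\<close>

lemma trace_sandwich_expansion_nonneg: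
  fixes X :: "real^'p^'n" and Ai Hi H :: "real^'p^'p"
  assumes "transpose Ai = Ai" "transpose Hi = Hi" "pos_semidef H"
    and HiH: "Hi ** H = mat 1" and HHi: "H ** Hi = mat 1"
  shows "0 \<le> trace (Ai ** (transpose X ** X) ** Ai ** H) - 2 * t * trace ((transpose X ** X) ** Ai)
              + t^2 * trace (Hi ** (transpose X ** X))"
proof -
  define C where "C = transpose X ** X"
  define S where "S = Ai - t *\<^sub>R Hi"
  have "transpose S = S"
    unfolding S_def using assms(1,2) by (simp add: transpose_def vec_eq_iff)
  then have "transpose (S ** transpose X) = X ** S"
    by (simp add: matrix_transpose_mul)
  then have "0 \<le> trace (X ** S ** H ** (S ** transpose X))"
    using trace_congruence_nonneg[OF assms(3), of "S ** transpose X"] by simp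
  also have "\<dots> = trace ((X ** (S ** H ** S)) ** transpose X)"
    by (simp add: matrix_mul_assoc)
  also have "\<dots> = trace (transpose X ** (X ** (S ** H ** S)))"
    by (rule trace_mul_sym)
  also have "\<dots> = trace ((C ** S ** H) ** S)"
    unfolding C_def by (simp add: matrix_mul_assoc)
  also have "\<dots> = trace (S ** (C ** S ** H))"
    by (rule trace_mul_sym)
  also have "\<dots> = trace (S ** C ** S ** H)"
    by (simp add: matrix_mul_assoc)
  also have "S ** C ** S ** H = Ai ** C ** Ai ** H - t *\<^sub>R (Ai ** C ** Hi ** H)
         - t *\<^sub>R (Hi ** C ** Ai ** H) + (t * t) *\<^sub>R (Hi ** C ** Hi ** H)"
    unfolding S_def by (simp add: matrix_diff_rdistrib matrix_diff_ldistrib matrix_scaleR_left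
       matrix_scaleR_right matrix_add_rdistrib matrix_add_ldistrib algebra_simps)
  also have "trace \<dots> = trace (Ai ** C ** Ai ** H) - 2 * t * trace (C ** Ai) + t^2 * trace (Hi ** C)"
  proof -
    have "trace (Ai ** C ** Hi ** H) = trace (C ** Ai)"
      by (metis HiH matrix_mul_assoc matrix_mul_rid trace_mul_sym)
    moreover have "trace (Hi ** C ** Ai ** H) = trace (C ** Ai)"
      by (metis HHi matrix_mul_assoc matrix_mul_lid trace_mul_sym)
    moreover have "Hi ** C ** Hi ** H = Hi ** C"
      by (metis HiH matrix_mul_assoc matrix_mul_rid)
    ultimately show ?thesis
      by (simp add: trace_add trace_sub trace_scaleR power2_eq_square)
  qed
  finally show ?thesis unfolding C_def .
qed

text \<open>A matrix AM-GM inequality: expansion of \<open>0 \<le> tr(Ci (A - c C) Ai (A - c C))\<close>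
  for \<open>C = X\<^sup>T X\<close>, \<open>Ci = C\<^sup>-\<^sup>1\<close>, \<open>Ai = A\<^sup>-\<^sup>1\<close>.\<close>

lemma trace_am_gm:
  fixes X :: "real^'p^'n" and A Ai Ci :: "real^'p^'p"
  assumes "transpose A = A" "pos_semidef Ai" "transpose Ai = Ai" "transpose Ci = Ci"
    and AiA: "Ai ** A = mat 1" and AAi: "A ** Ai = mat 1"
    and CiC: "Ci ** (transpose X ** X) = mat 1"
  shows "0 \<le> c^2 * trace ((transpose X ** X) ** Ai) + trace (Ci ** A) - 2 * c * real CARD('p)"
proof -
  define C where "C = transpose X ** X"
  define Y where "Y = A - c *\<^sub>R C"
  have "transpose C = C"
    unfolding C_def by (simp add: matrix_transpose_mul)
  then have "transpose Y = Y"
    unfolding Y_def using assms(1) by (simp add: transpose_def vec_eq_iff)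
  then have "transpose (Y ** Ci ** transpose X) = X ** Ci ** Y"
    by (simp add: matrix_transpose_mul assms(4) matrix_mul_assoc)
  then have "0 \<le> trace (X ** Ci ** Y ** Ai ** (Y ** Ci ** transpose X))"
    using trace_congruence_nonneg[OF assms(2), of "Y ** Ci ** transpose X"] by simp
  also have "\<dots> = trace ((X ** (Ci ** Y ** Ai ** Y ** Ci)) ** transpose X)"
    by (simp add: matrix_mul_assoc)
  also have "\<dots> = trace (transpose X ** (X ** (Ci ** Y ** Ai ** Y ** Ci)))"
    by (rule trace_mul_sym)
  also have "\<dots> = trace ((C ** Ci ** Y ** Ai ** Y) ** Ci)"
    unfolding C_def by (simp add: matrix_mul_assoc)
  also have "\<dots> = trace (Ci ** (C ** Ci ** Y ** Ai ** Y))"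
    by (rule trace_mul_sym)
  also have "\<dots> = trace ((Ci ** C) ** Ci ** Y ** Ai ** Y)"
    by (simp add: matrix_mul_assoc)
  also have "\<dots> = trace (Ci ** Y ** Ai ** Y)"
    using CiC unfolding C_def by simp
  also have "Ci ** Y ** Ai ** Y = Ci ** A ** Ai ** A - c *\<^sub>R (Ci ** A ** Ai ** C)
         - c *\<^sub>R (Ci ** C ** Ai ** A) + (c * c) *\<^sub>R (Ci ** C ** Ai ** C)"
    unfolding Y_def by (simp add: matrix_diff_rdistrib matrix_diff_ldistrib matrix_scaleR_left
       matrix_scaleR_right matrix_add_rdistrib matrix_add_ldistrib algebra_simps)
  also have "trace \<dots> = trace (Ci ** A) - 2 * c * real CARD('p) + c^2 * trace (C ** Ai)"
  proof -
    have "Ci ** A ** Ai ** A = Ci ** A"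
      by (metis AiA matrix_mul_assoc matrix_mul_rid)
    moreover have "Ci ** A ** Ai ** C = mat 1"
      by (metis AAi CiC C_def matrix_mul_assoc matrix_mul_rid)
    moreover have "Ci ** C ** Ai ** A = mat 1"
      by (metis AiA CiC C_def matrix_mul_assoc matrix_mul_rid)
    moreover have "trace (Ci ** C ** Ai ** C) = trace (C ** Ai)"
      by (metis CiC C_def matrix_mul_assoc matrix_mul_lid trace_mul_sym)
    moreover have "trace ((2::real^'p^'p) * mat 1) = 2 * real CARD('p)"
      by (simp add: trace_def mat_def)
    ultimately show ?thesis
      by (simp add: trace_add trace_sub trace_scaleR power2_eq_square trace_I)
  qed
  finally show ?thesis unfolding C_def by simp
qed

text \<open>Cramer's rule gives a Borel measurable version of \<^const>\<open>matrix_inv\<close>, which is an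
  unspecified \<open>SOME\<close>-value on singular matrices; \<open>cramer_inv\<close> is \<open>0\<close> there.\<close>

definition cramer_inv :: "real^'p^'p \<Rightarrow> real^'p^'p" where
  "cramer_inv C = (\<chi> k j. det (\<chi> a l. if l = k then (if a = j then 1 else 0) else C$a$l) / det C)"

lemma cramer_inv_singular: "det C = 0 \<Longrightarrow> cramer_inv C = 0"
  by (simp add: cramer_inv_def vec_eq_iff)

lemma cramer_inv_eq_matrix_inv:
  fixes C :: "real^'p^'p"
  assumes "det C \<noteq> 0"
  shows "cramer_inv C = matrix_inv C"
proof -
  have CCi: "C ** matrix_inv C = mat 1"
    using assms invertible_det_nz matrix_inv_right by blast
  have "cramer_inv C $ k $ j = matrix_inv C $ k $ j" for k j
  proof -
    have "C *v (matrix_inv C *v axis j 1) = axis j 1"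
      by (simp add: matrix_vector_mul_assoc CCi)
    then have "(matrix_inv C *v axis j 1) $ k
        = det (\<chi> i l. if l = k then (axis j 1 :: real^'p) $ i else C$i$l) / det C"
      using cramer[OF assms] by simp
    moreover have "(matrix_inv C *v axis j 1) $ k = matrix_inv C $ k $ j"
      by (simp add: matrix_vector_mult_def axis_def if_distrib cong: if_cong)
    moreover have "(\<chi> i l. if l = k then (axis j 1 :: real^'p) $ i else C$i$l)
        = (\<chi> a l. if l = k then (if a = j then 1 else 0) else C$a$l)"
      by (simp add: axis_def vec_eq_iff)
    ultimately show ?thesis
      by (simp add: cramer_inv_def)
  qed
  then show ?thesis by (simp add: vec_eq_iff)
qed

section \<open>Measurability\<close>

lemma borel_measurable_vec:
  fixes f :: "'m \<Rightarrow> 'a::euclidean_space ^ 'n"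
  assumes "\<And>i. (\<lambda>x. f x $ i) \<in> borel_measurable M"
  shows "f \<in> borel_measurable M"
proof (subst borel_measurable_euclidean_space, intro ballI)
  fix b :: "'a^'n" assume "b \<in> Basis"
  then obtain i u where b: "b = axis i u" "u \<in> Basis" unfolding Basis_vec_def by auto
  have "(\<lambda>x. (f x $ i) \<bullet> u) \<in> borel_measurable M"
    using assms[of i] by measurable
  then show "(\<lambda>x. f x \<bullet> b) \<in> borel_measurable M"
    by (simp add: b inner_axis)
qed

lemma borel_measurable_vec_nth[measurable]:
  "(\<lambda>x::'a::euclidean_space^'n. x $ i) \<in> borel_measurable borel"
  by (intro borel_measurable_continuous_onI linear_continuous_on bounded_linear_vec_nth)

lemma borel_measurable_matrix_mult[measurable (raw)]:
  fixes f :: "'a \<Rightarrow> real^'n^'m" and g :: "'a \<Rightarrow> real^'k^'n"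
  assumes [measurable]: "f \<in> borel_measurable M" "g \<in> borel_measurable M"
  shows "(\<lambda>x. f x ** g x) \<in> borel_measurable M"
  by (intro borel_measurable_vec) (simp add: matrix_matrix_mult_def)

lemma borel_measurable_trace[measurable (raw)]:
  fixes f :: "'a \<Rightarrow> real^'n^'n"
  assumes [measurable]: "f \<in> borel_measurable M"
  shows "(\<lambda>x. trace (f x)) \<in> borel_measurable M"
  unfolding trace_def by measurable

lemma borel_measurable_outerp_self[measurable]:
  "(\<lambda>x::real^'p. outerp x x) \<in> borel_measurable borel"
  unfolding outerp_def by (intro borel_measurable_vec) simp

lemma borel_measurable_det[measurable]: "(det :: real^'p^'p \<Rightarrow> real) \<in> borel_measurable borel"
  unfolding det_def by measurable

lemma borel_measurable_cramer_inv[measurable]: "cramer_inv \<in> borel_measurable borel"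
proof (intro borel_measurable_vec)
  fix k j
  have "(\<lambda>C::real^'p^'p. (\<chi> a l. if l = k then (if a = j then 1 else 0) else C$a$l) :: real^'p^'p)
      \<in> borel_measurable borel"
    by (intro borel_measurable_vec) simp
  then have "(\<lambda>C::real^'p^'p. det (\<chi> a l. if l = k then (if a = j then 1 else 0) else C$a$l))
      \<in> borel_measurable borel"
    using borel_measurable_det by (rule measurable_compose)
  then show "(\<lambda>C. cramer_inv C $ k $ j) \<in> borel_measurable borel"
    unfolding cramer_inv_def by simp
qed

lemma borel_measurable_deriv:
  fixes g :: "real \<Rightarrow> real"
  assumes "\<And>t. g differentiable (at t)"
  shows "deriv g \<in> borel_measurable borel"
proof (rule borel_measurable_LIMSEQ_real)
  fix x :: real
  have "((\<lambda>h. (g (x + h) - g x) / h) \<longlongrightarrow> deriv g x) (at 0)"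
    using assms DERIV_deriv_iff_real_differentiable DERIV_def by blast
  note quotient_limit = this[unfolded LIMSEQ_SEQ_conv[symmetric], rule_format]
  have "(\<lambda>n. 1 / real (Suc n)) \<longlonglongrightarrow> 0"
    using LIMSEQ_inverse_real_of_nat by (simp add: inverse_eq_divide)
  then have "(\<lambda>n. (g (x + 1 / real (Suc n)) - g x) / (1 / real (Suc n))) \<longlonglongrightarrow> deriv g x"
    using quotient_limit[of "\<lambda>n. 1 / real (Suc n)"] by simp
  then show "(\<lambda>n. (g (x + 1 / real (Suc n)) - g x) * real (Suc n)) \<longlonglongrightarrow> deriv g x"
    by simp
next
  fix n :: nat
  have "continuous_on UNIV g"
    using assms by (meson continuous_at_imp_continuous_on differentiable_imp_continuous_within)
  then have [measurable]: "g \<in> borel_measurable borel"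
    using borel_measurable_continuous_onI by blast
  show "(\<lambda>x. (g (x + 1 / real (Suc n)) - g x) * real (Suc n)) \<in> borel_measurable borel"
    by measurable
qed

section \<open>Gram matrices of the design\<close>

definition weighted_gram :: "(real^'p \<Rightarrow> real) \<Rightarrow> ('n::finite \<Rightarrow> real^'p) \<Rightarrow> real^'p^'p" where
  "weighted_gram d w = (\<Sum>i\<in>UNIV. d (w i) *\<^sub>R outerp (w i) (w i))"

lemma XtX_eq_weighted_gram: "XtX w = weighted_gram (\<lambda>_. 1) w"
  by (simp add: XtX_def weighted_gram_def Xmat_def outerp_def matrix_matrix_mult_def transpose_def
      vec_eq_iff sum_component)

lemma XtDX_eq_weighted_gram: "XtDX g \<beta> w = weighted_gram (\<lambda>x. deriv g (x \<bullet> \<beta>)) w"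
  by (simp add: XtDX_def weighted_gram_def Xmat_def Dmat_def outerp_def matrix_matrix_mult_def
      transpose_def vec_eq_iff sum_component if_distrib if_distribR sum.delta' mult_ac cong: if_cong)

lemma XtX_remove_row: "XtX w = outerp (w i) (w i) + XtX (w(i := 0))"
proof -
  have "XtX w = outerp (w i) (w i) + (\<Sum>l\<in>UNIV - {i}. outerp (w l) (w l))"
    unfolding XtX_eq_weighted_gram weighted_gram_def by (simp add: sum.remove[of UNIV i])
  moreover have "XtX (w(i := 0)) = (\<Sum>l\<in>UNIV - {i}. outerp (w l) (w l))"
    unfolding XtX_eq_weighted_gram weighted_gram_def
    by (simp add: sum.remove[of UNIV i] outerp_def zero_vec_def)
  ultimately show ?thesis by simp
qed

lemma transpose_weighted_gram: "transpose (weighted_gram d w) = weighted_gram d w"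
  by (simp add: weighted_gram_def transpose_def outerp_def vec_eq_iff sum_component mult_ac)

lemma transpose_XtX: "transpose (XtX w) = XtX w"
  by (simp add: XtX_eq_weighted_gram transpose_weighted_gram)

lemma transpose_XtDX: "transpose (XtDX g \<beta> w) = XtDX g \<beta> w"
  by (simp add: XtDX_eq_weighted_gram transpose_weighted_gram)

lemma weighted_gram_mult_vector:
  "weighted_gram d w *v v = (\<Sum>i\<in>UNIV. (d (w i) * (w i \<bullet> v)) *\<^sub>R w i)"
  by (simp add: weighted_gram_def sum_matrix_vector_mult outerp_mult_vector scaleR_matrix_vector_mult)

lemma weighted_gram_quadratic_form:
  "v \<bullet> (weighted_gram d w *v v) = (\<Sum>i\<in>UNIV. d (w i) * (w i \<bullet> v)^2)"
  by (simp add: weighted_gram_mult_vector inner_sum_right power2_eq_square inner_commute mult_ac)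

lemma XtX_quadratic_form: "v \<bullet> (XtX w *v v) = (\<Sum>i\<in>UNIV. (w i \<bullet> v)^2)"
  by (simp add: XtX_eq_weighted_gram weighted_gram_quadratic_form)

lemma weighted_gram_pos_semidef: "(\<And>x. 0 \<le> d x) \<Longrightarrow> pos_semidef (weighted_gram d w)"
  unfolding pos_semidef_def weighted_gram_quadratic_form by (auto intro!: sum_nonneg)

lemma weighted_gram_kernel:
  assumes "v \<bullet> (XtX w *v v) = 0"
  shows "weighted_gram d w *v v = 0"
proof -
  have "\<forall>i\<in>UNIV. (w i \<bullet> v)^2 = 0"
    using assms unfolding XtX_quadratic_form by (subst sum_nonneg_eq_0_iff[symmetric]) auto
  then show ?thesis
    unfolding weighted_gram_mult_vector by simp
qed

lemma XtX_pos_def: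
  assumes "invertible (XtX w)" "v \<noteq> 0"
  shows "0 < v \<bullet> (XtX w *v v)"
proof (rule ccontr)
  assume "\<not> 0 < v \<bullet> (XtX w *v v)"
  then have "v \<bullet> (XtX w *v v) = 0"
    unfolding XtX_quadratic_form using sum_nonneg[of UNIV "\<lambda>i. (w i \<bullet> v)^2"] by force
  then have "XtX w *v v = 0"
    using weighted_gram_kernel[of v w "\<lambda>_. 1"] by (simp add: XtX_eq_weighted_gram)
  then show False
    using assms inj_matrix_vector_mult by (metis injD matrix_vector_mult_0_right)
qed

lemma invertible_XtX_if_invertible_weighted_gram:
  assumes "invertible (weighted_gram d w)"
  shows "invertible (XtX w)"
proof -
  have "v = 0" if "XtX w *v v = 0" for v
  proof -
    have "weighted_gram d w *v v = 0"
      using that by (intro weighted_gram_kernel) simp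
    then show "v = 0"
      using assms inj_matrix_vector_mult by (metis injD matrix_vector_mult_0_right)
  qed
  then show ?thesis
    using matrix_left_invertible_ker invertible_left_inverse by blast
qed

text \<open>The leverage score \<open>x\<^sub>i\<^sup>T (X\<^sup>T X)\<^sup>-\<^sup>1 x\<^sub>i\<close> of row \<open>i\<close>, set to \<open>0\<close> when \<open>X\<^sup>T X\<close> is singular.\<close>

definition leverage :: "'n \<Rightarrow> ('n::finite \<Rightarrow> real^'p) \<Rightarrow> real" where
  "leverage i w = trace (cramer_inv (XtX w) ** outerp (w i) (w i))"

lemma leverage_bounds: "0 \<le> leverage i w \<and> leverage i w \<le> 1"
proof (cases "det (XtX w) = 0")
  case True
  then show ?thesis by (simp add: leverage_def cramer_inv_singular trace_def)
next
  case False
  define u where "u = matrix_inv (XtX w) *v w i"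
  define a where "a = w i \<bullet> u"
  have "XtX w *v u = w i"
    using False invertible_det_nz matrix_inv_right
    unfolding u_def by (metis matrix_vector_mul_assoc matrix_vector_mul_lid)
  then have a_sum: "a = (\<Sum>l\<in>UNIV. (w l \<bullet> u)^2)"
    using XtX_quadratic_form[of u w] by (simp add: a_def inner_commute)
  have "a^2 \<le> (\<Sum>l\<in>UNIV. (w l \<bullet> u)^2)"
    unfolding a_def by (intro member_le_sum) auto
  then have "a^2 \<le> a"
    using a_sum by simp
  moreover have "0 \<le> a"
    unfolding a_sum by (intro sum_nonneg) auto
  ultimately have "a \<le> 1"
    using mult_le_cancel_left1[of a a] by (cases "a = 0") (auto simp: power2_eq_square)
  moreover have "leverage i w = a"
    unfolding leverage_def cramer_inv_eq_matrix_inv[OF False] trace_mult_outerp u_def a_def ..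
  ultimately show ?thesis using \<open>0 \<le> a\<close> by simp
qed

lemma sum_leverage:
  fixes w :: "'n::finite \<Rightarrow> real^'p"
  assumes "det (XtX w) \<noteq> 0"
  shows "(\<Sum>i\<in>UNIV. leverage i w) = real CARD('p)"
proof -
  have "(\<Sum>i\<in>UNIV. leverage i w) = trace (matrix_inv (XtX w) ** (\<Sum>i\<in>UNIV. outerp (w i) (w i)))"
    by (simp add: leverage_def cramer_inv_eq_matrix_inv[OF assms] matrix_mult_sum_right trace_sum)
  also have "\<dots> = trace (matrix_inv (XtX w) ** XtX w)"
    by (simp add: XtX_eq_weighted_gram weighted_gram_def)
  also have "\<dots> = real CARD('p)"
    using assms invertible_det_nz matrix_inv_left by (metis trace_I of_nat_id)
  finally show ?thesis .
qed

lemma trace_inv_XtX_weighted_gram: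
  assumes "det (XtX w) \<noteq> 0"
  shows "trace (matrix_inv (XtX w) ** weighted_gram d w) = (\<Sum>i\<in>UNIV. d (w i) * leverage i w)"
  by (simp add: weighted_gram_def leverage_def cramer_inv_eq_matrix_inv[OF assms]
      matrix_mult_sum_right trace_sum matrix_scaleR_right trace_scaleR)

section \<open>Expectations over the i.i.d. design\<close>

lemma prob_space_sampleM: "prob_space Px \<Longrightarrow> prob_space (sampleM Px :: ('n::finite \<Rightarrow> real^'p) measure)"
  unfolding sampleM_def by (rule prob_space_PiM)

lemma measurable_sampleM_row[measurable]:
  assumes "sets Px = sets borel"
  shows "(\<lambda>w. w i) \<in> borel_measurable (sampleM Px :: ('n::finite \<Rightarrow> real^'p) measure)"
proof -
  have "(\<lambda>w. w i) \<in> measurable (PiM UNIV (\<lambda>_. Px)) Px"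
    by (rule measurable_component_singleton) simp
  then show ?thesis
    unfolding sampleM_def by (simp add: measurable_cong_sets[OF refl assms])
qed

lemma borel_measurable_weighted_gram:
  assumes "sets Px = sets borel" and [measurable]: "d \<in> borel_measurable borel"
  shows "weighted_gram d \<in> borel_measurable (sampleM Px :: ('n::finite \<Rightarrow> real^'p) measure)"
  unfolding weighted_gram_def using assms(1) by measurable

lemma borel_measurable_XtX:
  "sets Px = sets borel \<Longrightarrow> XtX \<in> borel_measurable (sampleM Px :: ('n::finite \<Rightarrow> real^'p) measure)"
  unfolding XtX_eq_weighted_gram[abs_def] by (rule borel_measurable_weighted_gram) simp_all

lemma borel_measurable_leverage:
  "sets Px = sets borel \<Longrightarrow> leverage i \<in> borel_measurable (sampleM Px :: ('n::finite \<Rightarrow> real^'p) measure)"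
  unfolding leverage_def[abs_def] using borel_measurable_XtX by measurable

lemma transpose_integral_weighted_gram:
  "integrable M (weighted_gram d) \<Longrightarrow>
    transpose (\<integral> w. weighted_gram d w \<partial>M) = (\<integral> w. weighted_gram d w \<partial>M)"
  by (simp add: integral_bounded_linear[OF bounded_linear_transpose, symmetric] transpose_weighted_gram)

lemma integral_XtX_pos_def:
  assumes "prob_space M" "integrable M XtX" "AE w in M. invertible (XtX w)" "v \<noteq> 0"
  shows "0 < v \<bullet> ((\<integral> w. XtX w \<partial>M) *v v)"
proof -
  interpret prob_space M by (fact assms(1))
  have "(\<integral> w. 0 \<partial>M) < (\<integral> w. v \<bullet> (XtX w *v v) \<partial>M)"
  proof (rule integral_less_AE_space)
    show "integrable M (\<lambda>w. v \<bullet> (XtX w *v v))"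
      using integrable_bounded_linear[OF bounded_linear_quadratic_form assms(2)] .
    show "AE w in M. 0 < v \<bullet> (XtX w *v v)"
      using assms(3) by eventually_elim (use XtX_pos_def assms(4) in blast)
  qed (simp_all add: emeasure_space_1)
  then show ?thesis
    by (simp add: integral_bounded_linear[OF bounded_linear_quadratic_form assms(2)])
qed

locale outer_cond_exp_const =
  fixes Px :: "(real^'p) measure" and d :: "real^'p \<Rightarrow> real" and \<delta> :: real
  assumes prob_space_Px: "prob_space Px" and sets_Px: "sets Px = sets borel"
    and d_measurable: "d \<in> borel_measurable borel" and d_nonneg: "\<And>x. 0 \<le> d x"
    and delta_pos: "0 < \<delta>"
    and cond_exp_d: "AE x in Px.
      real_cond_exp Px (vimage_algebra (space Px) (\<lambda>x. outerp x x) borel) d x = \<delta>"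
begin

lemmas [measurable] = d_measurable

lemma nn_integral_weight_outerp:
  assumes psi: "\<psi> \<in> borel_measurable borel"
  shows "(\<integral>\<^sup>+ x. ennreal (d x) * \<psi> (outerp x x) \<partial>Px) = ennreal \<delta> * (\<integral>\<^sup>+ x. \<psi> (outerp x x) \<partial>Px)"
proof -
  interpret prob_space Px by (rule prob_space_Px)
  define F where "F = vimage_algebra (space Px) (\<lambda>x::real^'p. outerp x x) borel"
  have outerp_Px: "(\<lambda>x::real^'p. outerp x x) \<in> borel_measurable Px"
    using measurable_cong_sets[OF sets_Px refl] borel_measurable_outerp_self by blast
  have [measurable]: "d \<in> borel_measurable Px"
    using measurable_cong_sets[OF sets_Px refl] d_measurable by blast
  interpret F: finite_measure_subalgebra Px F
  proof
    show "subalgebra Px F"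
      unfolding subalgebra_def F_def using outerp_Px
      by (auto simp: sets_vimage_algebra2 measurable_sets)
  qed
  have neg_part: "(\<lambda>x. ennreal (- d x)) = (\<lambda>x. 0)"
    using d_nonneg by (auto intro!: ext ennreal_neg)
  have "AE x in Px. 0 = nn_cond_exp Px F (\<lambda>x. 0) x"
    by (rule F.nn_cond_exp_F_meas) simp
  then have "AE x in Px. enn2real (nn_cond_exp Px F (\<lambda>x. ennreal (d x)) x) = \<delta>"
    using cond_exp_d unfolding F_def[symmetric] real_cond_exp_def neg_part
    by eventually_elim (metis diff_zero enn2real_0)
  then have cond_exp_ennreal: "AE x in Px. nn_cond_exp Px F (\<lambda>x. ennreal (d x)) x = ennreal \<delta>"
    by eventually_elim (metis delta_pos enn2real_eq_0_iff ennreal_enn2real_if less_irrefl)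
  have "(\<lambda>x. \<psi> (outerp x x)) \<in> borel_measurable F"
    unfolding F_def by (rule measurable_compose[OF measurable_vimage_algebra1 psi]) simp
  then have "(\<integral>\<^sup>+ x. \<psi> (outerp x x) * ennreal (d x) \<partial>Px)
      = (\<integral>\<^sup>+ x. \<psi> (outerp x x) * nn_cond_exp Px F (\<lambda>x. ennreal (d x)) x \<partial>Px)"
    by (intro F.nn_cond_exp_intg[symmetric]) auto
  also have "\<dots> = (\<integral>\<^sup>+ x. ennreal \<delta> * \<psi> (outerp x x) \<partial>Px)"
    by (rule nn_integral_cong_AE) (use cond_exp_ennreal in \<open>auto simp: mult.commute\<close>)
  also have "\<dots> = ennreal \<delta> * (\<integral>\<^sup>+ x. \<psi> (outerp x x) \<partial>Px)"
    by (rule nn_integral_cmult) (use outerp_Px psi in measurable)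
  finally show ?thesis
    by (simp add: mult.commute)
qed

lemma nn_integral_weight_row:
  fixes \<phi> :: "real^'p^'p \<Rightarrow> ('n::finite \<Rightarrow> real^'p) \<Rightarrow> ennreal" and i :: 'n
  assumes phi: "\<And>c. (\<lambda>Q. \<phi> Q c) \<in> borel_measurable borel"
    and f_eq: "\<And>w. f w = \<phi> (outerp (w i) (w i)) (w(i := 0))"
    and f_measurable: "f \<in> borel_measurable (sampleM Px)"
  shows "(\<integral>\<^sup>+ w. ennreal (d (w i)) * f w \<partial>sampleM Px) = ennreal \<delta> * (\<integral>\<^sup>+ w. f w \<partial>sampleM Px)"
proof -
  interpret Px: prob_space Px by (rule prob_space_Px)
  interpret product_sigma_finite "\<lambda>_::'n. Px" ..
  define I where "I = UNIV - {i}"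
  have I: "finite I" "i \<notin> I"
    unfolding I_def by auto
  have sampleM_eq: "(sampleM Px :: ('n \<Rightarrow> real^'p) measure) = PiM (insert i I) (\<lambda>_. Px)"
    unfolding sampleM_def I_def by (simp add: insert_absorb)
  have [measurable]: "d \<in> borel_measurable Px"
    using measurable_cong_sets[OF sets_Px refl] d_measurable by blast
  have [measurable]: "f \<in> borel_measurable (PiM (insert i I) (\<lambda>_. Px))"
    using f_measurable sampleM_eq by simp
  have inner_measurable: "(\<lambda>x. \<integral>\<^sup>+ y. f (x(i := y)) \<partial>Px) \<in> borel_measurable (PiM I (\<lambda>_. Px))"
    by (rule Px.borel_measurable_nn_integral) measurable
  have inner: "(\<integral>\<^sup>+ y. ennreal (d y) * f (x(i := y)) \<partial>Px) = ennreal \<delta> * (\<integral>\<^sup>+ y. f (x(i := y)) \<partial>Px)"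
    for x :: "'n \<Rightarrow> real^'p"
    using nn_integral_weight_outerp[OF phi, of "x(i := 0)"] by (simp add: f_eq)
  have "(\<integral>\<^sup>+ w. ennreal (d (w i)) * f w \<partial>sampleM Px)
      = (\<integral>\<^sup>+ x. (\<integral>\<^sup>+ y. ennreal (d y) * f (x(i := y)) \<partial>Px) \<partial>PiM I (\<lambda>_. Px))"
    unfolding sampleM_eq by (subst product_nn_integral_insert[OF I]) simp_all
  also have "\<dots> = ennreal \<delta> * (\<integral>\<^sup>+ x. (\<integral>\<^sup>+ y. f (x(i := y)) \<partial>Px) \<partial>PiM I (\<lambda>_. Px))"
    unfolding inner by (rule nn_integral_cmult[OF inner_measurable])
  also have "\<dots> = ennreal \<delta> * (\<integral>\<^sup>+ w. f w \<partial>sampleM Px)"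
    unfolding sampleM_eq by (subst product_nn_integral_insert[OF I]) simp_all
  finally show ?thesis .
qed

lemma integral_weight_row:
  fixes \<psi> :: "real^'p^'p \<Rightarrow> ('n::finite \<Rightarrow> real^'p) \<Rightarrow> real" and i :: 'n
  assumes psi: "\<And>c. (\<lambda>Q. \<psi> Q c) \<in> borel_measurable borel"
    and f_eq: "\<And>w. f w = \<psi> (outerp (w i) (w i)) (w(i := 0))"
    and f_nonneg: "\<And>w. 0 \<le> f w"
    and f_measurable: "f \<in> borel_measurable (sampleM Px)"
  shows "(\<integral> w. d (w i) * f w \<partial>sampleM Px) = \<delta> * (\<integral> w. f w \<partial>sampleM Px)"
proof -
  have [measurable]: "f \<in> borel_measurable (sampleM Px)"
    by (fact f_measurable)
  note [measurable] = measurable_sampleM_row[OF sets_Px]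
  have "(\<integral>\<^sup>+ w. ennreal (d (w i)) * ennreal (f w) \<partial>sampleM Px)
      = ennreal \<delta> * (\<integral>\<^sup>+ w. ennreal (f w) \<partial>sampleM Px)"
  proof (rule nn_integral_weight_row[where \<phi> = "\<lambda>Q c. ennreal (\<psi> Q c)"])
    show "(\<lambda>Q. ennreal (\<psi> Q c)) \<in> borel_measurable borel" for c
      using psi[of c] by measurable
    show "ennreal (f w) = ennreal (\<psi> (outerp (w i) (w i)) (w(i := 0)))" for w
      by (simp add: f_eq)
    show "(\<lambda>w. ennreal (f w)) \<in> borel_measurable (sampleM Px)"
      by measurable
  qed
  then have "(\<integral>\<^sup>+ w. ennreal (d (w i) * f w) \<partial>sampleM Px)
      = ennreal \<delta> * (\<integral>\<^sup>+ w. ennreal (f w) \<partial>sampleM Px)"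
    using d_nonneg f_nonneg by (simp add: ennreal_mult)
  then show ?thesis
    using d_nonneg f_nonneg delta_pos
    by (simp add: integral_eq_nn_integral enn2real_mult)
qed

thm nn_integral_weight_row
lemma integrable_weight_row:
  "integrable (sampleM Px :: ('n::finite \<Rightarrow> real^'p) measure) (\<lambda>w. d (w i))"
proof -
  let ?M = "sampleM Px :: ('n \<Rightarrow> real^'p) measure"
  interpret prob_space ?M
    by (rule prob_space_sampleM[OF prob_space_Px])
  note [measurable] = measurable_sampleM_row[OF sets_Px]
  have "(\<integral>\<^sup>+ w. ennreal (d (w i)) * 1 \<partial>?M) = ennreal \<delta> * (\<integral>\<^sup>+ w. 1 \<partial>?M)"
    by (rule nn_integral_weight_row[where \<phi> = "\<lambda>Q c. 1"]) auto
  then have "(\<integral>\<^sup>+ w. ennreal (d (w i)) \<partial>?M) < \<infinity>"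
    by (simp add: emeasure_space_1)
  then show ?thesis
    by (intro integrableI_nonneg) (auto simp: d_nonneg)
qed

lemma integral_weighted_gram:
  fixes M :: "('n::finite \<Rightarrow> real^'p) measure"
  defines "M \<equiv> sampleM Px"
  assumes int_gram: "integrable M (weighted_gram d)" and int_XtX: "integrable M XtX"
  shows "(\<integral> w. weighted_gram d w \<partial>M) = \<delta> *\<^sub>R (\<integral> w. XtX w \<partial>M)"
proof -
  note [measurable] = measurable_sampleM_row[OF sets_Px]
  have int_qf_gram: "integrable M (\<lambda>w. v \<bullet> (weighted_gram d w *v v))" for v
    using integrable_bounded_linear[OF bounded_linear_quadratic_form int_gram] .
  have int_qf_XtX: "integrable M (\<lambda>w. v \<bullet> (XtX w *v v))" for v
    using integrable_bounded_linear[OF bounded_linear_quadratic_form int_XtX] .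
  have int_row: "integrable M (\<lambda>w. (w i \<bullet> v)^2)" for i v
  proof (rule Bochner_Integration.integrable_bound[OF int_qf_XtX])
    show "(\<lambda>w. (w i \<bullet> v)^2) \<in> borel_measurable M"
      unfolding M_def by measurable
    show "AE w in M. norm ((w i \<bullet> v)^2) \<le> norm (v \<bullet> (XtX w *v v))"
      unfolding XtX_quadratic_form
      by (intro AE_I2) (simp add: member_le_sum[of i UNIV "\<lambda>i. (w i \<bullet> v)^2" for w] sum_nonneg)
  qed
  have int_weighted_row: "integrable M (\<lambda>w. d (w i) * (w i \<bullet> v)^2)" for i v
  proof (rule Bochner_Integration.integrable_bound[OF int_qf_gram])
    show "(\<lambda>w. d (w i) * (w i \<bullet> v)^2) \<in> borel_measurable M"
      unfolding M_def by measurable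
    show "AE w in M. norm (d (w i) * (w i \<bullet> v)^2) \<le> norm (v \<bullet> (weighted_gram d w *v v))"
      unfolding weighted_gram_quadratic_form
      by (intro AE_I2)
        (simp add: d_nonneg sum_nonneg member_le_sum[of i UNIV "\<lambda>i. d (w i) * (w i \<bullet> v)^2" for w])
  qed
  have "v \<bullet> ((\<integral> w. weighted_gram d w \<partial>M) *v v) = v \<bullet> ((\<delta> *\<^sub>R (\<integral> w. XtX w \<partial>M)) *v v)" for v
  proof -
    have "v \<bullet> ((\<integral> w. weighted_gram d w \<partial>M) *v v) = (\<integral> w. v \<bullet> (weighted_gram d w *v v) \<partial>M)"
      by (rule integral_bounded_linear[OF bounded_linear_quadratic_form int_gram, symmetric])
    also have "\<dots> = (\<Sum>i\<in>UNIV. \<integral> w. d (w i) * (w i \<bullet> v)^2 \<partial>M)"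
      unfolding weighted_gram_quadratic_form by (rule Bochner_Integration.integral_sum) (rule int_weighted_row)
    also have "\<dots> = (\<Sum>i\<in>UNIV. \<delta> * (\<integral> w. (w i \<bullet> v)^2 \<partial>M))"
    proof (rule sum.cong[OF refl])
      fix i
      show "(\<integral> w. d (w i) * (w i \<bullet> v)^2 \<partial>M) = \<delta> * (\<integral> w. (w i \<bullet> v)^2 \<partial>M)"
        unfolding M_def
      proof (rule integral_weight_row[where \<psi> = "\<lambda>Q c. v \<bullet> (Q *v v)"])
        show "(\<lambda>Q. v \<bullet> (Q *v v)) \<in> borel_measurable borel" for c :: "'n \<Rightarrow> real^'p"
          by (intro borel_measurable_continuous_onI linear_continuous_on bounded_linear_quadratic_form)
      qed (simp_all add: quadratic_form_outerp)
    qed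
    also have "\<dots> = \<delta> * (\<integral> w. v \<bullet> (XtX w *v v) \<partial>M)"
      unfolding XtX_quadratic_form by (simp add: Bochner_Integration.integral_sum[OF int_row] sum_distrib_left)
    also have "\<dots> = v \<bullet> ((\<delta> *\<^sub>R (\<integral> w. XtX w \<partial>M)) *v v)"
      by (simp add: integral_bounded_linear[OF bounded_linear_quadratic_form int_XtX]
          scaleR_matrix_vector_mult)
    finally show ?thesis .
  qed
  moreover have "transpose (\<integral> w. weighted_gram d w \<partial>M) = (\<integral> w. weighted_gram d w \<partial>M)"
    using int_gram by (rule transpose_integral_weighted_gram)
  moreover have "transpose (\<integral> w. XtX w \<partial>M) = (\<integral> w. XtX w \<partial>M)"
    using transpose_integral_weighted_gram[of M "\<lambda>_. 1"] int_XtX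
    by (simp add: XtX_eq_weighted_gram[abs_def])
  ultimately have "(\<integral> w. weighted_gram d w \<partial>M) - \<delta> *\<^sub>R (\<integral> w. XtX w \<partial>M) = 0"
    by (intro symmetric_quadratic_form_eq_0)
      (auto simp: transpose_def vec_eq_iff matrix_vector_mult_diff_rdistrib inner_diff_right)
  then show ?thesis
    by simp
qed

lemma integrable_weighted_leverage:
  "integrable (sampleM Px :: ('n::finite \<Rightarrow> real^'p) measure) (\<lambda>w. d (w i) * leverage i w)"
proof (rule Bochner_Integration.integrable_bound[OF integrable_weight_row])
  note [measurable] = measurable_sampleM_row[OF sets_Px] borel_measurable_leverage[OF sets_Px]
  show "(\<lambda>w. d (w i) * leverage i w) \<in> borel_measurable (sampleM Px)"
    by measurable
  show "AE w in sampleM Px. norm (d (w i) * leverage i w) \<le> norm (d (w i))"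
  proof (rule AE_I2)
    fix w :: "'n \<Rightarrow> real^'p"
    show "norm (d (w i) * leverage i w) \<le> norm (d (w i))"
      using leverage_bounds[of i w] d_nonneg[of "w i"] by (simp add: abs_mult mult_left_le)
  qed
qed

lemma integral_weighted_leverage:
  fixes M :: "('n::finite \<Rightarrow> real^'p) measure"
  defines "M \<equiv> sampleM Px"
  assumes "AE w in M. det (XtX w) \<noteq> 0"
  shows "(\<integral> w. (\<Sum>i\<in>UNIV. d (w i) * leverage i w) \<partial>M) = \<delta> * real CARD('p)"
proof -
  interpret prob_space M
    unfolding M_def by (rule prob_space_sampleM[OF prob_space_Px])
  note [measurable] = measurable_sampleM_row[OF sets_Px] borel_measurable_leverage[OF sets_Px]
  have int_leverage: "integrable M (leverage i)" for i
  proof (rule integrable_const_bound[where B = 1])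
    show "AE w in M. norm (leverage i w) \<le> 1"
    proof (rule AE_I2)
      fix w
      show "norm (leverage i w) \<le> 1"
        using leverage_bounds[of i w] by simp
    qed
  qed (simp add: M_def)
  have "(\<integral> w. (\<Sum>i\<in>UNIV. d (w i) * leverage i w) \<partial>M) = (\<Sum>i\<in>UNIV. \<integral> w. d (w i) * leverage i w \<partial>M)"
    unfolding M_def by (intro Bochner_Integration.integral_sum integrable_weighted_leverage)
  also have "\<dots> = (\<Sum>i\<in>UNIV. \<delta> * (\<integral> w. leverage i w \<partial>M))"
  proof (rule sum.cong[OF refl])
    fix i
    show "(\<integral> w. d (w i) * leverage i w \<partial>M) = \<delta> * (\<integral> w. leverage i w \<partial>M)"
      unfolding M_def
    proof (rule integral_weight_row[where \<psi> = "\<lambda>Q c. trace (cramer_inv (Q + XtX c) ** Q)"])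
      show "(\<lambda>Q. trace (cramer_inv (Q + XtX c) ** Q)) \<in> borel_measurable borel" for c :: "'n \<Rightarrow> real^'p"
        by measurable
      show "leverage i w = trace (cramer_inv (outerp (w i) (w i) + XtX (w(i := 0))) ** outerp (w i) (w i))"
        for w
        unfolding leverage_def XtX_remove_row[of w i, symmetric] ..
    qed (use leverage_bounds in auto)
  qed
  also have "\<dots> = \<delta> * (\<integral> w. (\<Sum>i\<in>UNIV. leverage i w) \<partial>M)"
    by (simp add: Bochner_Integration.integral_sum[OF int_leverage] sum_distrib_left)
  also have "(\<integral> w. (\<Sum>i\<in>UNIV. leverage i w) \<partial>M) = (\<integral> w. real CARD('p) \<partial>M)"
    by (rule integral_cong_AE) (use assms(2) sum_leverage in \<open>auto simp: M_def\<close>)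
  finally show ?thesis
    by (simp add: prob_space)
qed

end

section \<open>The quadratic risk\<close>

lemma quadratic_risk_coefficients_pos:
  fixes L U S q k s :: real
  assumes q: "0 < q" and k: "0 < k" "k < 1" and U: "U = k * q" and S: "S = k * s" and "q \<le> s"
    and L: "\<And>t. 0 \<le> L - 2 * t * s + t^2 * q"
  shows "0 < L + U - 2 * S" "0 < L - S"
proof -
  have "k * (1 - k) * q > 0"
    using k q by simp
  moreover have "L \<ge> 2 * k * s - k^2 * q"
    using L[of k] by simp
  ultimately show "0 < L + U - 2 * S"
    unfolding U S by (simp add: power2_eq_square algebra_simps)
  have "s\<^sup>2 / q - 2 * (s / q) * s + (s / q)^2 * q = 0"
    using q by (simp add: power2_eq_square field_simps)
  then have "L \<ge> s\<^sup>2 / q"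
    using L[of "s / q"] by linarith
  moreover have "s\<^sup>2 / q \<ge> s"
    using \<open>q \<le> s\<close> q by (simp add: power2_eq_square field_simps mult_right_mono)
  moreover have "s > k * s"
    using \<open>q \<le> s\<close> q k by (simp add: mult_less_cancel_right1)
  ultimately show "0 < L - S"
    unfolding S by linarith
qed

lemma quadratic_risk_minimizer:
  fixes r :: "real \<Rightarrow> real" and B L U S \<sigma> :: real
  assumes r: "\<And>\<alpha>. r \<alpha> = \<alpha>^2 * B + \<sigma> * (\<alpha>^2 * U + (1 - \<alpha>)^2 * L + 2 * \<alpha> * (1 - \<alpha>) * S)"
    and "0 \<le> B" "0 < \<sigma>" "0 < L + U - 2 * S" "0 < L - S"
  shows "let a = \<sigma> * (L - S) / (B + \<sigma> * (L + U - 2 * S))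
         in (\<forall>b. r a \<le> r b) \<and> (\<forall>c. (\<forall>b. r c \<le> r b) \<longrightarrow> c = a) \<and> a > 0
            \<and> r a = \<sigma> * L - \<sigma>^2 * (L - S)^2 / (B + \<sigma> * (L + U - 2 * S))"
proof -
  define D where "D = B + \<sigma> * (L + U - 2 * S)"
  define a where "a = \<sigma> * (L - S) / D"
  have "0 < D"
    unfolding D_def using assms(2-4) by (simp add: add_nonneg_pos)
  have completed_square: "r b = D * (b - a)^2 + (\<sigma> * L - \<sigma>^2 * (L - S)^2 / D)" for b
  proof -
    have Da: "D * a = \<sigma> * (L - S)"
      unfolding a_def using \<open>0 < D\<close> by simp
    have "D * (b - a)^2 = D * b^2 - 2 * (D * a) * b + (D * a) * (D * a) / D"
      using \<open>0 < D\<close> by (simp add: power2_eq_square algebra_simps)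
    then have "D * (b - a)^2 = D * b^2 - 2 * (\<sigma> * (L - S)) * b + \<sigma>^2 * (L - S)^2 / D"
      unfolding Da by (simp add: power2_eq_square algebra_simps)
    moreover have "r b = D * b^2 - 2 * (\<sigma> * (L - S)) * b + \<sigma> * L"
      unfolding r D_def by (simp add: power2_eq_square algebra_simps)
    ultimately show ?thesis
      by simp
  qed
  have "\<forall>b. r a \<le> r b"
    unfolding completed_square using \<open>0 < D\<close> by simp
  moreover have "c = a" if "\<forall>b. r c \<le> r b" for c
  proof -
    have "D * (c - a)^2 \<le> 0"
      using that[rule_format, of a] unfolding completed_square by simp
    then show "c = a"
      using \<open>0 < D\<close> by (simp add: mult_le_0_iff)
  qed
  moreover have "a > 0"
    unfolding a_def using assms(3,5) \<open>0 < D\<close> by simp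
  moreover have "r a = \<sigma> * L - \<sigma>^2 * (L - S)^2 / D"
    unfolding completed_square by simp
  ultimately show ?thesis
    unfolding Let_def D_def[symmetric] a_def[symmetric] by blast
qed

section \<open>The generalized linear model\<close>

definition trace_XtX_inv_XtDX ::
    "(real^'p) measure \<Rightarrow> (real \<Rightarrow> real) \<Rightarrow> real^'p \<Rightarrow> 'n::finite itself \<Rightarrow> real" where
  "trace_XtX_inv_XtDX Px g \<beta> (_::'n itself) =
    trace (\<integral> w. XtX w ** matrix_inv (XtDX g \<beta> w) \<partial>(sampleM Px :: ('n \<Rightarrow> real^'p) measure))"

lemma vgs_eq_trace_XtX_inv_XtDX:
  fixes N :: "'n::finite itself"
  shows "vgs Px g \<beta> N = (real CARD('n) - 1) / real CARD('n) * trace_XtX_inv_XtDX Px g \<beta> N"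
  by (simp add: vgs_def trace_XtX_inv_XtDX_def)

locale glm_design = outer_cond_exp_const Px "\<lambda>x. deriv g (x \<bullet> \<beta>)" \<delta>
  for Px :: "(real^'p) measure" and g :: "real \<Rightarrow> real" and \<beta> :: "real^'p" and \<delta> :: real +
  fixes N :: "'n::finite itself"
  assumes invertible_XtDX: "AE w in (sampleM Px :: ('n \<Rightarrow> real^'p) measure). invertible (XtDX g \<beta> w)"
    and integrable_vl: "integrable (sampleM Px :: ('n \<Rightarrow> real^'p) measure)
      (\<lambda>w. matrix_inv (XtDX g \<beta> w) ** XtX w ** matrix_inv (XtDX g \<beta> w))"
    and integrable_XtDX: "integrable (sampleM Px :: ('n \<Rightarrow> real^'p) measure) (XtDX g \<beta>)"
    and integrable_XtX: "integrable (sampleM Px :: ('n \<Rightarrow> real^'p) measure) XtX"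
    and integrable_vs: "integrable (sampleM Px :: ('n \<Rightarrow> real^'p) measure)
      (\<lambda>w. XtX w ** matrix_inv (XtDX g \<beta> w))"
    and integrable_var: "integrable (sampleM Px :: ('n \<Rightarrow> real^'p) measure)
      (\<lambda>w. outerp (real CARD('n) *\<^sub>R covhat g \<beta> w
          - integral\<^sup>L (sampleM Px :: ('n \<Rightarrow> real^'p) measure) (\<lambda>w. real CARD('n) *\<^sub>R covhat g \<beta> w))
        (real CARD('n) *\<^sub>R covhat g \<beta> w
          - integral\<^sup>L (sampleM Px :: ('n \<Rightarrow> real^'p) measure) (\<lambda>w. real CARD('n) *\<^sub>R covhat g \<beta> w)))"
begin

abbreviation M :: "('n \<Rightarrow> real^'p) measure" where
  "M \<equiv> sampleM Px"

abbreviation H :: "real^'p^'p" where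
  "H \<equiv> Hg Px g \<beta> N"

lemma prob_space_M: "prob_space M"
  by (rule prob_space_sampleM[OF prob_space_Px])

lemma AE_invertible_XtX: "AE w in M. invertible (XtX w)"
  using invertible_XtDX
  by eventually_elim (simp add: XtDX_eq_weighted_gram invertible_XtX_if_invertible_weighted_gram)

lemma H_eq: "H = \<delta> *\<^sub>R (\<integral> w. XtX w \<partial>M)"
  using integral_weighted_gram integrable_XtDX integrable_XtX
  by (simp add: Hg_def XtDX_eq_weighted_gram[abs_def])

lemma H_pos_def: "v \<noteq> 0 \<Longrightarrow> 0 < v \<bullet> (H *v v)"
  using integral_XtX_pos_def[OF prob_space_M integrable_XtX AE_invertible_XtX] delta_pos
  by (simp add: H_eq scaleR_matrix_vector_mult)

lemma invertible_H: "invertible H"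
  using H_pos_def by (rule invertible_if_pos_def)

lemma pos_semidef_H: "pos_semidef H"
  unfolding pos_semidef_def using H_pos_def by (metis inner_zero_left order.refl less_imp_le)

lemma transpose_H: "transpose H = H"
  using transpose_integral_weighted_gram integrable_XtDX
  by (simp add: Hg_def XtDX_eq_weighted_gram[abs_def])

lemma trace_inv_H_integral_XtX: "trace (matrix_inv H ** (\<integral> w. XtX w \<partial>M)) = real CARD('p) / \<delta>"
proof -
  have "(\<integral> w. XtX w \<partial>M) = (1 / \<delta>) *\<^sub>R H"
    using delta_pos by (simp add: H_eq)
  then show ?thesis
    by (simp add: matrix_scaleR_right matrix_inv_left[OF invertible_H] trace_scaleR trace_I)
qed

lemma vgu_eq: "vgu Px g \<beta> N = (real CARD('n) - 1) / real CARD('n) * (real CARD('p) / \<delta>)"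
  by (simp add: vgu_def trace_inv_H_integral_XtX)

lemma vgl_lower_bound: "0 \<le> vgl Px g \<beta> N - 2 * t * trace_XtX_inv_XtDX Px g \<beta> N + t^2 * (real CARD('p) / \<delta>)"
proof -
  define F1 where "F1 w = trace (matrix_inv (XtDX g \<beta> w) ** XtX w ** matrix_inv (XtDX g \<beta> w) ** H)"
    for w :: "'n \<Rightarrow> real^'p"
  define F2 where "F2 w = trace (XtX w ** matrix_inv (XtDX g \<beta> w))" for w :: "'n \<Rightarrow> real^'p"
  define F3 where "F3 w = trace (matrix_inv H ** XtX w)" for w :: "'n \<Rightarrow> real^'p"
  have int: "integrable M F1" "integrable M F2" "integrable M F3"
    unfolding F1_def F2_def F3_def
    using integrable_bounded_linear[OF bounded_linear_trace_mult_right integrable_vl]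
      integrable_bounded_linear[OF bounded_linear_trace integrable_vs]
      integrable_bounded_linear[OF bounded_linear_trace_mult_left integrable_XtX] by simp_all
  have "AE w in M. 0 \<le> F1 w - 2 * t * F2 w + t^2 * F3 w"
    using invertible_XtDX
  proof eventually_elim
    case (elim w)
    have "transpose (matrix_inv (XtDX g \<beta> w)) = matrix_inv (XtDX g \<beta> w)"
      using elim transpose_XtDX by (rule transpose_matrix_inv_symmetric)
    then show ?case
      using trace_sandwich_expansion_nonneg[of _ "matrix_inv H" H "Xmat w" t]
        transpose_matrix_inv_symmetric[OF invertible_H transpose_H] pos_semidef_H
        matrix_inv_left[OF invertible_H] matrix_inv_right[OF invertible_H]
      unfolding F1_def F2_def F3_def XtX_def by simp
  qed
  then have "0 \<le> (\<integral> w. F1 w - 2 * t * F2 w + t^2 * F3 w \<partial>M)"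
    by (rule integral_nonneg_AE)
  also have "\<dots> = (\<integral> w. F1 w \<partial>M) - 2 * t * (\<integral> w. F2 w \<partial>M) + t^2 * (\<integral> w. F3 w \<partial>M)"
    using int by simp
  also have "(\<integral> w. F1 w \<partial>M) = vgl Px g \<beta> N"
    unfolding F1_def vgl_def by (rule integral_bounded_linear[OF bounded_linear_trace_mult_right integrable_vl])
  also have "(\<integral> w. F2 w \<partial>M) = trace_XtX_inv_XtDX Px g \<beta> N"
    unfolding F2_def trace_XtX_inv_XtDX_def by (rule integral_bounded_linear[OF bounded_linear_trace integrable_vs])
  also have "(\<integral> w. F3 w \<partial>M) = real CARD('p) / \<delta>"
    unfolding F3_def trace_inv_H_integral_XtX[symmetric]
    by (rule integral_bounded_linear[OF bounded_linear_trace_mult_left integrable_XtX])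
  finally show ?thesis .
qed

lemma trace_XtX_inv_XtDX_lower_bound: "real CARD('p) / \<delta> \<le> trace_XtX_inv_XtDX Px g \<beta> N"
proof -
  interpret prob_space M
    by (rule prob_space_M)
  define p where "p = real CARD('p)"
  define F where "F w = trace (XtX w ** matrix_inv (XtDX g \<beta> w))" for w :: "'n \<Rightarrow> real^'p"
  define G where "G w = (\<Sum>i\<in>UNIV. deriv g (w i \<bullet> \<beta>) * leverage i w)" for w :: "'n \<Rightarrow> real^'p"
  have int_F: "integrable M F"
    unfolding F_def using integrable_bounded_linear[OF bounded_linear_trace integrable_vs] .
  have int_G: "integrable M G"
    unfolding G_def by (intro Bochner_Integration.integrable_sum integrable_weighted_leverage)
  have "AE w in M. det (XtX w) \<noteq> 0"
    using AE_invertible_XtX by eventually_elim (simp add: invertible_det_nz)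
  then have integral_G: "(\<integral> w. G w \<partial>M) = \<delta> * p"
    unfolding G_def p_def by (rule integral_weighted_leverage)
  have "AE w in M. 2 * \<delta> * p - G w \<le> \<delta>^2 * F w"
    using invertible_XtDX
  proof eventually_elim
    case (elim w)
    have "invertible (XtX w)"
      using elim by (simp add: XtDX_eq_weighted_gram invertible_XtX_if_invertible_weighted_gram)
    have "0 \<le> \<delta>^2 * trace ((transpose (Xmat w) ** Xmat w) ** matrix_inv (XtDX g \<beta> w))
        + trace (matrix_inv (XtX w) ** XtDX g \<beta> w) - 2 * \<delta> * p"
      unfolding p_def
    proof (rule trace_am_gm)
      show "pos_semidef (matrix_inv (XtDX g \<beta> w))"
        using elim d_nonneg
        by (simp add: pos_semidef_matrix_inv XtDX_eq_weighted_gram weighted_gram_pos_semidef)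
      show "transpose (matrix_inv (XtDX g \<beta> w)) = matrix_inv (XtDX g \<beta> w)"
        using elim transpose_XtDX by (rule transpose_matrix_inv_symmetric)
      show "transpose (matrix_inv (XtX w)) = matrix_inv (XtX w)"
        using \<open>invertible (XtX w)\<close> transpose_XtX by (rule transpose_matrix_inv_symmetric)
      show "matrix_inv (XtX w) ** (transpose (Xmat w) ** Xmat w) = mat 1"
        using matrix_inv_left[OF \<open>invertible (XtX w)\<close>] by (simp add: XtX_def)
    qed (use elim transpose_XtDX matrix_inv_left matrix_inv_right in auto)
    moreover have "det (XtX w) \<noteq> 0"
      using \<open>invertible (XtX w)\<close> invertible_det_nz by blast
    then have "trace (matrix_inv (XtX w) ** XtDX g \<beta> w) = G w"
      by (simp add: G_def XtDX_eq_weighted_gram trace_inv_XtX_weighted_gram)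
    ultimately show ?case
      by (simp add: F_def XtX_def)
  qed
  then have "(\<integral> w. 2 * \<delta> * p - G w \<partial>M) \<le> (\<integral> w. \<delta>^2 * F w \<partial>M)"
    by (rule integral_mono_AE[rotated 2]) (use int_F int_G in auto)
  then have "\<delta> * p \<le> \<delta> * (\<delta> * trace_XtX_inv_XtDX Px g \<beta> N)"
    using int_F int_G
    by (simp add: integral_G F_def prob_space power2_eq_square trace_XtX_inv_XtDX_def
        integral_bounded_linear[OF bounded_linear_trace integrable_vs])
  then show ?thesis
    using delta_pos by (simp add: p_def field_simps)
qed

lemma Bg_nonneg: "0 \<le> Bg Px g \<beta> N"
proof -
  define u where "u w = real CARD('n) *\<^sub>R covhat g \<beta> w - (\<integral> w. real CARD('n) *\<^sub>R covhat g \<beta> w \<partial>M)"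
    for w :: "'n \<Rightarrow> real^'p"
  have "Bg Px g \<beta> N = trace (matrix_inv H ** (\<integral> w. outerp (u w) (u w) \<partial>M))"
    by (simp add: Bg_def varmat_def u_def)
  also have "\<dots> = (\<integral> w. trace (matrix_inv H ** outerp (u w) (u w)) \<partial>M)"
    using integrable_var unfolding u_def
    by (rule integral_bounded_linear[OF bounded_linear_trace_mult_left, symmetric])
  also have "\<dots> \<ge> 0"
    using pos_semidef_matrix_inv[OF invertible_H pos_semidef_H]
    by (intro integral_nonneg_AE) (simp add: trace_mult_outerp pos_semidef_def)
  finally show ?thesis .
qed

end

theorem proposition2:
  fixes Px :: "(real^'p) measure" and g :: "real \<Rightarrow> real" and \<beta> :: "real^'p"
    and \<sigma>2 :: real and \<delta> :: real and N :: "'n::finite itself"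
  assumes p_lt_n: "CARD('p) < CARD('n)"
    and Px_prob: "prob_space Px" and Px_sets: "sets Px = sets borel"
    and mean0: "integrable Px (\<lambda>x. x)" "integral\<^sup>L Px (\<lambda>x. x) = 0"
    and g_mono: "mono g" and g_diff: "\<And>t. g differentiable (at t)"
    and sigma_pos: "\<sigma>2 > 0"
    and inv_as: "AE w in (sampleM Px :: ('n \<Rightarrow> real^'p) measure). invertible (XtDX g \<beta> w)"
    and vl_fin: "integrable (sampleM Px :: ('n \<Rightarrow> real^'p) measure)
                   (\<lambda>w. matrix_inv (XtDX g \<beta> w) ** XtX w ** matrix_inv (XtDX g \<beta> w))"
    and Hg_fin: "integrable (sampleM Px :: ('n \<Rightarrow> real^'p) measure) (XtDX g \<beta>)"
    and XtX_fin: "integrable (sampleM Px :: ('n \<Rightarrow> real^'p) measure) XtX"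
    and vs_fin: "integrable (sampleM Px :: ('n \<Rightarrow> real^'p) measure) (\<lambda>w. XtX w ** matrix_inv (XtDX g \<beta> w))"
    and cov_fin: "integrable (sampleM Px :: ('n \<Rightarrow> real^'p) measure) (\<lambda>w. real CARD('n) *\<^sub>R covhat g \<beta> w)"
    and var_fin: "integrable (sampleM Px :: ('n \<Rightarrow> real^'p) measure)
                   (\<lambda>w. outerp (real CARD('n) *\<^sub>R covhat g \<beta> w - integral\<^sup>L (sampleM Px :: ('n \<Rightarrow> real^'p) measure) (\<lambda>w. real CARD('n) *\<^sub>R covhat g \<beta> w))
                                (real CARD('n) *\<^sub>R covhat g \<beta> w - integral\<^sup>L (sampleM Px :: ('n \<Rightarrow> real^'p) measure) (\<lambda>w. real CARD('n) *\<^sub>R covhat g \<beta> w)))"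
    and delta: "\<delta> > 0"
    and cond: "AE x in Px. real_cond_exp Px (vimage_algebra (space Px) (\<lambda>x. outerp x x) borel)
                              (\<lambda>x. deriv g (x \<bullet> \<beta>)) x = \<delta>"
  shows "vgl Px g \<beta> N + vgu Px g \<beta> N - 2 * vgs Px g \<beta> N > 0
     \<and> (let a = \<sigma>2 * (vgl Px g \<beta> N - vgs Px g \<beta> N) /
               (Bg Px g \<beta> N + \<sigma>2 * (vgl Px g \<beta> N + vgu Px g \<beta> N - 2 * vgs Px g \<beta> N))
        in (\<forall>b. rdot Px g \<beta> \<sigma>2 N a \<le> rdot Px g \<beta> \<sigma>2 N b)
           \<and> (\<forall>c. (\<forall>b. rdot Px g \<beta> \<sigma>2 N c \<le> rdot Px g \<beta> \<sigma>2 N b) \<longrightarrow> c = a)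
           \<and> a > 0
           \<and> rdot Px g \<beta> \<sigma>2 N a = \<sigma>2 * vgl Px g \<beta> N
               - \<sigma>2^2 * (vgl Px g \<beta> N - vgs Px g \<beta> N)^2 /
                 (Bg Px g \<beta> N + \<sigma>2 * (vgl Px g \<beta> N + vgu Px g \<beta> N - 2 * vgs Px g \<beta> N)))"
proof -
  interpret glm_design Px g \<beta> \<delta> N
  proof (intro glm_design.intro outer_cond_exp_const.intro glm_design_axioms.intro)
    show "(\<lambda>x. deriv g (x \<bullet> \<beta>)) \<in> borel_measurable borel"
      using borel_measurable_deriv[OF g_diff] by measurable
    show "0 \<le> deriv g (x \<bullet> \<beta>)" for x
      using mono_on_imp_deriv_nonneg[of UNIV g "deriv g (x \<bullet> \<beta>)" "x \<bullet> \<beta>"] g_mono g_diff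
      by (simp add: DERIV_deriv_iff_real_differentiable)
  qed (fact assms)+
  have "1 < CARD('n)"
    using p_lt_n zero_less_card_finite[where 'a = 'p] by linarith
  then have "0 < (real CARD('n) - 1) / real CARD('n)" "(real CARD('n) - 1) / real CARD('n) < 1"
    by (auto simp: field_simps)
  note coefficients_pos = quadratic_risk_coefficients_pos[OF _ this vgu_eq vgs_eq_trace_XtX_inv_XtDX
      trace_XtX_inv_XtDX_lower_bound vgl_lower_bound]
  show ?thesis
    using coefficients_pos quadratic_risk_minimizer[OF rdot_def Bg_nonneg sigma_pos coefficients_pos]
      delta_pos by simp
qed

end
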